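(* Let $\overline{C}(\alpha)$, $0\le\alpha\le 2$, be as defined in the context. Then: (1) For real $0\le\alpha\le2$, $\overline{C}(\alpha)=\overline{C}(2-\alpha)>0$. (2) For real $0\le\alpha_1<\alpha_2\le2$ and $0<\theta<1$, $\overline{C}(\theta\alpha_1+(1-\theta)\alpha_2)\le\overline{C}(\alpha_1)^{\theta}\,\overline{C}(\alpha_2)^{1-\theta}$. (3) For real $0\le\alpha_1<\alpha_2\le1$, $\overline{C}(\alpha_1)\ge\overline{C}(\alpha_2)$; consequently the minimum of $\overline{C}(\alpha)$ over $0\le\alpha\le2$ is attained at $\alpha=1$. (4) For real $0\le\alpha<\tfrac12$, $\overline{C}(\alpha)=\infty$.
   Context: For a strictly increasing sequence $(\lambda_k)_{k=-\infty}^{\infty}$ of real numbers, put $\delta_k:=\min\{\lambda_k-\lambda_{k-1},\lambda_{k+1}-\lambda_k\}$. For $0\le\alpha\le2$, let $\overline{C}(\alpha)$ be the minimum of all constants $C(\alpha)$ such that $$\sum_{m=1}^N\sum_{\substack{n=1\\ n\ne m}}^N\frac{\delta_m^{2-\alpha}\delta_n^{\alpha}t_mt_n}{(\lambda_m-\lambda_n)^2}\le C(\alpha)\sum_{n=1}^N t_n^2$$ holds for every positive integer $N$, every strictly increasing real sequence $(\lambda_k)_{k\in\mathbb Z}$ and all nonnegative reals $t_1,\dots,t_N$; set $\overline{C}(\alpha)=\infty$ if no such real constant exists (with the usual conventions for $\infty$ in the inequalities). *)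

theory Defs
  imports "HOL-Analysis.Analysis"
begin

definition gapdelta :: "(int \<Rightarrow> real) \<Rightarrow> int \<Rightarrow> real" where
  "gapdelta lam k = min (lam k - lam (k - 1)) (lam (k + 1) - lam k)"

definition admissible_const :: "real \<Rightarrow> real \<Rightarrow> bool" where
  "admissible_const \<alpha> C \<longleftrightarrow>
     (\<forall>(N::nat) (lam::int \<Rightarrow> real) (t::nat \<Rightarrow> real).
        N \<ge> 1 \<longrightarrow> strict_mono lam \<longrightarrow> (\<forall>n\<in>{1..N}. t n \<ge> 0) \<longrightarrow>
        (\<Sum>m\<in>{1..N}. \<Sum>n\<in>{1..N}-{m}.
            gapdelta lam (int m) powr (2 - \<alpha>) * gapdelta lam (int n) powr \<alpha> * t m * t n
            / (lam (int m) - lam (int n))^2)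
        \<le> C * (\<Sum>n\<in>{1..N}. (t n)^2))"

definition Cbar :: "real \<Rightarrow> ereal" where
  "Cbar \<alpha> = Inf (ereal ` {C. admissible_const \<alpha> C})"

end

theory Submission
  imports Defs "HOL-Real_Asymp.Real_Asymp"
begin

(* Swapping m and n turns the form for alpha into the form for 2 - alpha.
   Each term is log-affine in alpha, since
   delta_m^(2 - alpha) delta_n^alpha = delta_m^2 (delta_n / delta_m)^alpha,
   so by Hoelder's inequality the form, and with it the best constant, is
   log-convex in alpha. Interpolating between alpha and 2 - alpha, which share
   their constants, shows that the constant can only decrease as alpha moves
   towards 1. For alpha < 1/2, a point of weight x at distance about 1 from x^2
   points of spacing x^(-2) makes the form at least x^(1 - 2 alpha)/8 times the
   sum of the squared weights, which is unbounded. *)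

lemma Holder_inequality_sum:
  fixes x y :: "'a \<Rightarrow> real"
  assumes "finite I" and x: "\<And>i. i \<in> I \<Longrightarrow> x i \<ge> 0" and y: "\<And>i. i \<in> I \<Longrightarrow> y i \<ge> 0"
    and \<theta>: "0 < \<theta>" "\<theta> < 1"
  shows "(\<Sum>i\<in>I. x i powr \<theta> * y i powr (1 - \<theta>))
           \<le> (\<Sum>i\<in>I. x i) powr \<theta> * (\<Sum>i\<in>I. y i) powr (1 - \<theta>)"
proof -
  define X where "X = (\<Sum>i\<in>I. x i)"
  define Y where "Y = (\<Sum>i\<in>I. y i)"
  have "X \<ge> 0" "Y \<ge> 0" unfolding X_def Y_def using x y by (simp_all add: sum_nonneg)
  show ?thesis
  proof (cases "X = 0 \<or> Y = 0")
    case True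
    then have "\<forall>i\<in>I. x i = 0 \<or> y i = 0"
      using sum_nonneg_eq_0_iff[OF \<open>finite I\<close>] x y unfolding X_def Y_def by blast
    then have "(\<Sum>i\<in>I. x i powr \<theta> * y i powr (1 - \<theta>)) = 0"
      by (intro sum.neutral) auto
    then show ?thesis using \<open>X \<ge> 0\<close> \<open>Y \<ge> 0\<close> X_def Y_def by simp
  next
    case False
    then have "X > 0" "Y > 0" using \<open>X \<ge> 0\<close> \<open>Y \<ge> 0\<close> by auto
    have Young: "x i powr \<theta> * y i powr (1 - \<theta>)
        \<le> X powr \<theta> * Y powr (1 - \<theta>) * (\<theta> * (x i / X) + (1 - \<theta>) * (y i / Y))"
      if i: "i \<in> I" for i
    proof (cases "x i = 0 \<or> y i = 0")
      case True
      then show ?thesis using x[OF i] y[OF i] \<open>X > 0\<close> \<open>Y > 0\<close> \<theta> by auto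
    next
      case False
      then have "x i > 0" "y i > 0" using x[OF i] y[OF i] by auto
      then have "(x i / X) powr \<theta> * (y i / Y) powr (1 - \<theta>) \<le> \<theta> * (x i / X) + (1 - \<theta>) * (y i / Y)"
        using Youngs_inequality_0[of \<theta> "1 - \<theta>" "x i / X" "y i / Y"] \<theta> \<open>X > 0\<close> \<open>Y > 0\<close> by auto
      moreover have "(x i / X) powr \<theta> * (y i / Y) powr (1 - \<theta>)
          = x i powr \<theta> * y i powr (1 - \<theta>) / (X powr \<theta> * Y powr (1 - \<theta>))"
        using \<open>x i > 0\<close> \<open>y i > 0\<close> \<open>X > 0\<close> \<open>Y > 0\<close> by (simp add: powr_divide)
      ultimately show ?thesis using \<open>X > 0\<close> \<open>Y > 0\<close> by (simp add: divide_le_eq mult.commute)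
    qed
    have "(\<Sum>i\<in>I. x i powr \<theta> * y i powr (1 - \<theta>))
        \<le> (\<Sum>i\<in>I. X powr \<theta> * Y powr (1 - \<theta>) * (\<theta> * (x i / X) + (1 - \<theta>) * (y i / Y)))"
      using Young by (rule sum_mono)
    also have "\<dots> = X powr \<theta> * Y powr (1 - \<theta>) * (\<theta> * (X / X) + (1 - \<theta>) * (Y / Y))"
      by (simp add: sum_distrib_left sum.distrib X_def Y_def flip: sum_distrib_left sum_divide_distrib)
    also have "\<dots> = X powr \<theta> * Y powr (1 - \<theta>)" using \<open>X > 0\<close> \<open>Y > 0\<close> by simp
    finally show ?thesis by (simp add: X_def Y_def)
  qed
qed

lemma powr_interpolate_monomial:
  fixes p q c :: real
  assumes "p > 0" "q > 0" "c \<ge> 0"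
  shows "(p powr u * q powr v * c) powr \<theta> * (p powr u' * q powr v' * c) powr (1 - \<theta>)
       = p powr (\<theta> * u + (1 - \<theta>) * u') * q powr (\<theta> * v + (1 - \<theta>) * v') * c"
proof (cases "c = 0")
  case False
  then have "c > 0" using assms by simp
  have "(p powr u * q powr v * c) powr \<theta> * (p powr u' * q powr v' * c) powr (1 - \<theta>)
     = (p powr (u * \<theta>) * p powr (u' * (1 - \<theta>))) * (q powr (v * \<theta>) * q powr (v' * (1 - \<theta>)))
       * (c powr \<theta> * c powr (1 - \<theta>))"
    using assms \<open>c > 0\<close> by (simp add: powr_mult powr_powr mult_ac)
  also have "\<dots> = p powr (\<theta> * u + (1 - \<theta>) * u') * q powr (\<theta> * v + (1 - \<theta>) * v') * c"
    using assms \<open>c > 0\<close> by (simp add: powr_add[symmetric] mult_ac)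
  finally show ?thesis .
qed simp

definition hilbert_term :: "real \<Rightarrow> (int \<Rightarrow> real) \<Rightarrow> (nat \<Rightarrow> real) \<Rightarrow> nat \<Rightarrow> nat \<Rightarrow> real" where
  "hilbert_term \<alpha> lam t m n =
     gapdelta lam (int m) powr (2 - \<alpha>) * gapdelta lam (int n) powr \<alpha> * t m * t n
       / (lam (int m) - lam (int n))^2"

definition hilbert_form :: "real \<Rightarrow> nat \<Rightarrow> (int \<Rightarrow> real) \<Rightarrow> (nat \<Rightarrow> real) \<Rightarrow> real" where
  "hilbert_form \<alpha> N lam t = (\<Sum>m\<in>{1..N}. \<Sum>n\<in>{1..N} - {m}. hilbert_term \<alpha> lam t m n)"

lemma admissible_const_iff_hilbert_form:
  "admissible_const \<alpha> C \<longleftrightarrow>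
     (\<forall>N lam t. N \<ge> 1 \<longrightarrow> strict_mono lam \<longrightarrow> (\<forall>n\<in>{1..N}. t n \<ge> 0) \<longrightarrow>
        hilbert_form \<alpha> N lam t \<le> C * (\<Sum>n\<in>{1..N}. (t n)^2))"
  unfolding admissible_const_def hilbert_form_def hilbert_term_def ..

lemma admissible_constD:
  assumes "admissible_const \<alpha> C" "N \<ge> 1" "strict_mono lam" "\<And>n. n \<in> {1..N} \<Longrightarrow> t n \<ge> 0"
  shows "hilbert_form \<alpha> N lam t \<le> C * (\<Sum>n\<in>{1..N}. (t n)^2)"
  using assms unfolding admissible_const_iff_hilbert_form by blast

lemma gapdelta_pos: "strict_mono lam \<Longrightarrow> gapdelta lam k > 0"
  unfolding gapdelta_def using strict_monoD[of lam "k - 1" k] strict_monoD[of lam k "k + 1"] by simp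

lemma hilbert_term_nonneg: "t m \<ge> 0 \<Longrightarrow> t n \<ge> 0 \<Longrightarrow> hilbert_term \<alpha> lam t m n \<ge> 0"
  unfolding hilbert_term_def by simp

lemma hilbert_form_nonneg: "(\<And>n. n \<in> {1..N} \<Longrightarrow> t n \<ge> 0) \<Longrightarrow> hilbert_form \<alpha> N lam t \<ge> 0"
  unfolding hilbert_form_def by (intro sum_nonneg) (auto intro!: hilbert_term_nonneg)

lemma hilbert_form_ge_row:
  assumes "\<And>n. n \<in> {1..N} \<Longrightarrow> t n \<ge> 0" "m \<in> {1..N}"
  shows "(\<Sum>n\<in>{1..N} - {m}. hilbert_term \<alpha> lam t m n) \<le> hilbert_form \<alpha> N lam t"
  unfolding hilbert_form_def using assms
  by (intro member_le_sum[of m "{1..N}" "\<lambda>m. \<Sum>n\<in>{1..N} - {m}. hilbert_term \<alpha> lam t m n"])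
     (auto intro!: sum_nonneg hilbert_term_nonneg)

lemma hilbert_term_swap: "hilbert_term (2 - \<alpha>) lam t n m = hilbert_term \<alpha> lam t m n"
  unfolding hilbert_term_def by (simp add: power2_commute mult_ac)

lemma hilbert_form_reflect: "hilbert_form (2 - \<alpha>) N lam t = hilbert_form \<alpha> N lam t"
proof -
  have off_diagonal: "{1..N} - {m} = {n \<in> {1..N}. m \<noteq> n}" for m :: nat by auto
  have "hilbert_form \<alpha> N lam t = (\<Sum>m\<in>{1..N}. \<Sum>n\<in>{n \<in> {1..N}. m \<noteq> n}. hilbert_term \<alpha> lam t m n)"
    unfolding hilbert_form_def off_diagonal ..
  also have "\<dots> = (\<Sum>n\<in>{1..N}. \<Sum>m\<in>{m \<in> {1..N}. m \<noteq> n}. hilbert_term (2 - \<alpha>) lam t n m)"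
    by (subst sum.swap_restrict) (simp_all add: hilbert_term_swap)
  also have "\<dots> = hilbert_form (2 - \<alpha>) N lam t"
    unfolding hilbert_form_def off_diagonal by (intro sum.cong) auto
  finally show ?thesis ..
qed

lemma hilbert_term_interpolate:
  assumes "strict_mono lam" "t m \<ge> 0" "t n \<ge> 0"
  shows "hilbert_term (\<theta> * a + (1 - \<theta>) * b) lam t m n
       = hilbert_term a lam t m n powr \<theta> * hilbert_term b lam t m n powr (1 - \<theta>)"
proof -
  have split: "hilbert_term \<alpha> lam t m n = gapdelta lam (int m) powr (2 - \<alpha>)
      * gapdelta lam (int n) powr \<alpha> * (t m * t n / (lam (int m) - lam (int n))^2)" for \<alpha>
    unfolding hilbert_term_def by simp
  have exponent: "2 - (\<theta> * a + (1 - \<theta>) * b) = \<theta> * (2 - a) + (1 - \<theta>) * (2 - b)"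
    by (simp add: algebra_simps)
  have "t m * t n / (lam (int m) - lam (int n))^2 \<ge> 0" using assms by simp
  then show ?thesis
    unfolding split exponent
    by (rule powr_interpolate_monomial[OF gapdelta_pos gapdelta_pos, OF assms(1) assms(1), symmetric])
qed

lemma hilbert_form_log_convex:
  assumes lam: "strict_mono lam" and t: "\<And>n. n \<in> {1..N} \<Longrightarrow> t n \<ge> 0"
    and \<theta>: "0 < \<theta>" "\<theta> < 1"
  shows "hilbert_form (\<theta> * a + (1 - \<theta>) * b) N lam t
       \<le> hilbert_form a N lam t powr \<theta> * hilbert_form b N lam t powr (1 - \<theta>)"
proof -
  let ?F = "\<lambda>\<alpha> m n. hilbert_term \<alpha> lam t m n"
  have "hilbert_form (\<theta> * a + (1 - \<theta>) * b) N lam t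
      = (\<Sum>m\<in>{1..N}. \<Sum>n\<in>{1..N} - {m}. ?F a m n powr \<theta> * ?F b m n powr (1 - \<theta>))"
    unfolding hilbert_form_def using lam t by (intro sum.cong refl) (simp add: hilbert_term_interpolate)
  also have "\<dots> \<le> (\<Sum>m\<in>{1..N}.
      (\<Sum>n\<in>{1..N} - {m}. ?F a m n) powr \<theta> * (\<Sum>n\<in>{1..N} - {m}. ?F b m n) powr (1 - \<theta>))"
    using t by (intro sum_mono Holder_inequality_sum \<theta>) (auto intro!: hilbert_term_nonneg)
  also have "\<dots> \<le> hilbert_form a N lam t powr \<theta> * hilbert_form b N lam t powr (1 - \<theta>)"
    unfolding hilbert_form_def using t
    by (intro Holder_inequality_sum \<theta>) (auto intro!: hilbert_term_nonneg sum_nonneg)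
  finally show ?thesis .
qed

lemma admissible_const_interpolate:
  assumes A: "admissible_const a C1" and B: "admissible_const b C2" and "C1 \<ge> 0" "C2 \<ge> 0"
    and \<theta>: "0 < \<theta>" "\<theta> < 1"
  shows "admissible_const (\<theta> * a + (1 - \<theta>) * b) (C1 powr \<theta> * C2 powr (1 - \<theta>))"
  unfolding admissible_const_iff_hilbert_form
proof (intro allI impI)
  fix N :: nat and lam :: "int \<Rightarrow> real" and t :: "nat \<Rightarrow> real"
  assume N: "N \<ge> 1" and lam: "strict_mono lam" and t: "\<forall>n\<in>{1..N}. t n \<ge> 0"
  define T where "T = (\<Sum>n\<in>{1..N}. (t n)^2)"
  have "T \<ge> 0" unfolding T_def by (simp add: sum_nonneg)
  have "hilbert_form (\<theta> * a + (1 - \<theta>) * b) N lam t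
      \<le> hilbert_form a N lam t powr \<theta> * hilbert_form b N lam t powr (1 - \<theta>)"
    by (rule hilbert_form_log_convex[OF lam _ \<theta>]) (use t in simp)
  also have "\<dots> \<le> (C1 * T) powr \<theta> * (C2 * T) powr (1 - \<theta>)"
    using admissible_constD[OF A N lam] admissible_constD[OF B N lam] t \<theta>
    by (intro mult_mono powr_mono2) (auto simp: T_def intro!: hilbert_form_nonneg)
  also have "\<dots> = C1 powr \<theta> * C2 powr (1 - \<theta>) * (T powr \<theta> * T powr (1 - \<theta>))"
    using \<open>C1 \<ge> 0\<close> \<open>C2 \<ge> 0\<close> \<open>T \<ge> 0\<close> by (simp add: powr_mult mult_ac)
  also have "T powr \<theta> * T powr (1 - \<theta>) = T"
    using \<open>T \<ge> 0\<close> by (cases "T = 0") (simp_all flip: powr_add)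
  finally show "hilbert_form (\<theta> * a + (1 - \<theta>) * b) N lam t
      \<le> C1 powr \<theta> * C2 powr (1 - \<theta>) * (\<Sum>n\<in>{1..N}. (t n)^2)"
    unfolding T_def .
qed

lemma admissible_const_reflect: "admissible_const (2 - \<alpha>) C \<longleftrightarrow> admissible_const \<alpha> C"
  unfolding admissible_const_iff_hilbert_form hilbert_form_reflect ..

lemma admissible_const_ge_one:
  assumes "admissible_const \<alpha> C"
  shows "C \<ge> 1"
proof -
  have two: "{1..2::nat} = {1, 2}" by auto
  have "gapdelta real_of_int k = 1" for k by (simp add: gapdelta_def)
  then have "hilbert_form \<alpha> 2 real_of_int (\<lambda>_. 1) = 2"
    unfolding hilbert_form_def hilbert_term_def two by (simp add: insert_Diff_if)
  moreover have "strict_mono real_of_int" by (simp add: strict_mono_def)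
  ultimately show ?thesis
    using admissible_constD[OF assms, of 2 real_of_int "\<lambda>_. 1"] by (simp add: two)
qed

lemma admissible_const_closer_to_one:
  assumes closer: "\<bar>\<beta> - 1\<bar> \<le> \<bar>\<alpha> - 1\<bar>" and A: "admissible_const \<alpha> C"
  shows "admissible_const \<beta> C"
proof -
  define r where "r = \<bar>\<alpha> - 1\<bar>"
  have lo: "admissible_const (1 - r) C" and hi: "admissible_const (1 + r) C"
    using A admissible_const_reflect[of \<alpha> C] by (auto simp: r_def abs_if)
  consider "\<beta> = 1 - r" | "\<beta> = 1 + r" | "\<bar>\<beta> - 1\<bar> < r"
    using closer unfolding r_def by linarith
  then show ?thesis
  proof cases
    case 3
    define \<theta> where "\<theta> = (1 + r - \<beta>) / (2 * r)"
    have "r > 0" using 3 by linarith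
    then have \<theta>: "0 < \<theta>" "\<theta> < 1" and \<beta>: "\<theta> * (1 - r) + (1 - \<theta>) * (1 + r) = \<beta>"
      using 3 by (auto simp: \<theta>_def field_simps)
    have "C \<ge> 1" using A by (rule admissible_const_ge_one)
    then have "C powr \<theta> * C powr (1 - \<theta>) = C" by (simp flip: powr_add)
    then show ?thesis
      using admissible_const_interpolate[OF lo hi _ _ \<theta>] \<beta> \<open>C \<ge> 1\<close> by simp
  qed (use lo hi in simp_all)
qed

lemma Cbar_le: "admissible_const \<alpha> C \<Longrightarrow> Cbar \<alpha> \<le> ereal C"
  unfolding Cbar_def by (rule Inf_lower) simp

lemma Cbar_ge_one: "Cbar \<alpha> \<ge> 1"
  unfolding Cbar_def by (rule Inf_greatest) (auto dest: admissible_const_ge_one)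

lemma Cbar_eq_infinity_iff: "Cbar \<alpha> = \<infinity> \<longleftrightarrow> (\<forall>C. \<not> admissible_const \<alpha> C)"
proof
  assume "Cbar \<alpha> = \<infinity>"
  then show "\<forall>C. \<not> admissible_const \<alpha> C" using Cbar_le by fastforce
next
  assume "\<forall>C. \<not> admissible_const \<alpha> C"
  then show "Cbar \<alpha> = \<infinity>" by (simp add: Cbar_def top_ereal_def)
qed

lemma admissible_const_Cbar:
  assumes c: "Cbar \<alpha> = ereal c"
  shows "admissible_const \<alpha> c"
  unfolding admissible_const_iff_hilbert_form
proof (intro allI impI)
  fix N :: nat and lam :: "int \<Rightarrow> real" and t :: "nat \<Rightarrow> real"
  assume N: "N \<ge> 1" and lam: "strict_mono lam" and t: "\<forall>n\<in>{1..N}. t n \<ge> 0"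
  define T where "T = (\<Sum>n\<in>{1..N}. (t n)^2)"
  have bound: "hilbert_form \<alpha> N lam t \<le> C * T" if "admissible_const \<alpha> C" for C
    unfolding T_def by (rule admissible_constD[OF that N lam]) (use t in simp)
  show "hilbert_form \<alpha> N lam t \<le> c * (\<Sum>n\<in>{1..N}. (t n)^2)"
  proof (cases "T = 0")
    case True
    obtain C0 where "admissible_const \<alpha> C0" using c Cbar_eq_infinity_iff[of \<alpha>] by force
    then show ?thesis using bound True T_def by fastforce
  next
    case False
    then have "T > 0" unfolding T_def by (simp add: sum_nonneg order_le_neq_trans)
    have "ereal (hilbert_form \<alpha> N lam t / T) \<le> Cbar \<alpha>"
      unfolding Cbar_def using bound \<open>T > 0\<close> by (auto intro!: Inf_greatest simp: divide_le_eq)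
    then show ?thesis using c \<open>T > 0\<close> by (simp add: divide_le_eq T_def)
  qed
qed

lemma Cbar_reflect: "Cbar (2 - \<alpha>) = Cbar \<alpha>"
  unfolding Cbar_def admissible_const_reflect ..

lemma Cbar_interpolate:
  assumes "Cbar a = ereal c1" "Cbar b = ereal c2" "0 < \<theta>" "\<theta> < 1"
  shows "Cbar (\<theta> * a + (1 - \<theta>) * b) \<le> ereal (c1 powr \<theta> * c2 powr (1 - \<theta>))"
proof (rule Cbar_le, rule admissible_const_interpolate)
  show "admissible_const a c1" "admissible_const b c2"
    using assms by (simp_all add: admissible_const_Cbar)
  then show "c1 \<ge> 0" "c2 \<ge> 0" by (auto dest: admissible_const_ge_one)
qed (use assms in simp_all)

lemma Cbar_closer_to_one: "\<bar>\<beta> - 1\<bar> \<le> \<bar>\<alpha> - 1\<bar> \<Longrightarrow> Cbar \<beta> \<le> Cbar \<alpha>"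
  unfolding Cbar_def by (intro Inf_superset_mono image_mono) (auto intro: admissible_const_closer_to_one)

definition isolated_cluster :: "real \<Rightarrow> int \<Rightarrow> real" where
  "isolated_cluster h k = (if k \<le> 1 then of_int k - 1 else 1 + of_int (k - 2) * h)"

lemma strict_mono_isolated_cluster:
  assumes "h > 0"
  shows "strict_mono (isolated_cluster h)"
proof
  fix u v :: int
  assume "u < v"
  consider "v \<le> 1" | "u \<le> 1" "v \<ge> 2" | "u \<ge> 2"
    using \<open>u < v\<close> by linarith
  then show "isolated_cluster h u < isolated_cluster h v"
  proof cases
    case 2
    have "real_of_int u - 1 \<le> 0" "0 \<le> of_int (v - 2) * h"
      using 2 assms by simp_all
    then show ?thesis using 2 by (simp add: isolated_cluster_def)
  qed (use \<open>u < v\<close> assms in \<open>simp_all add: isolated_cluster_def\<close>)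
qed

lemma gapdelta_isolated_cluster_one: "gapdelta (isolated_cluster h) 1 = 1"
  by (simp add: gapdelta_def isolated_cluster_def)

lemma gapdelta_isolated_cluster:
  assumes "h \<le> 1" "k \<ge> 2"
  shows "gapdelta (isolated_cluster h) k = h"
proof -
  have "isolated_cluster h k - isolated_cluster h (k - 1) \<ge> h"
    using assms by (cases "k = 2") (simp_all add: isolated_cluster_def algebra_simps)
  moreover have "isolated_cluster h (k + 1) - isolated_cluster h k = h"
    using assms by (simp add: isolated_cluster_def algebra_simps)
  ultimately show ?thesis unfolding gapdelta_def by simp
qed

lemma hilbert_term_isolated_cluster_ge:
  assumes "0 < h" "h \<le> 1" "2 \<le> n" "real (n - 2) * h \<le> 1" "t 1 \<ge> 0" "t n \<ge> 0"
  shows "h powr \<alpha> * t 1 * t n / 4 \<le> hilbert_term \<alpha> (isolated_cluster h) t 1 n"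
proof -
  let ?lam = "isolated_cluster h"
  have "1 \<le> ?lam (int n)" "?lam (int n) \<le> 2"
    using assms by (simp_all add: isolated_cluster_def of_nat_diff)
  then have "0 < (?lam (int n))^2" "(?lam (int n))^2 \<le> 4"
    using power_mono[of "?lam (int n)" 2 2] by simp_all
  moreover have "?lam 1 = 0" "gapdelta ?lam 1 = 1" "gapdelta ?lam (int n) = h"
    using assms by (simp_all add: isolated_cluster_def
        gapdelta_isolated_cluster_one gapdelta_isolated_cluster)
  then have "hilbert_term \<alpha> ?lam t 1 n = h powr \<alpha> * t 1 * t n / (?lam (int n))^2"
    by (simp add: hilbert_term_def)
  ultimately show ?thesis
    using assms frac_le[of "h powr \<alpha> * t 1 * t n" "h powr \<alpha> * t 1 * t n" "(?lam (int n))^2" 4]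
    by simp
qed

lemma admissible_const_growth:
  assumes A: "admissible_const \<alpha> C" and "j \<ge> 1"
  shows "real j powr (1 - 2 * \<alpha>) \<le> 8 * C"
proof -
  define x where "x = real j"
  define K where "K = j^2"
  define h where "h = 1 / real K"
  define lam where "lam = isolated_cluster h"
  define t where "t n = (if n = 1 then x else 1)" for n :: nat
  have "x \<ge> 1" "K \<ge> 1" using \<open>j \<ge> 1\<close> by (simp_all add: x_def K_def)
  then have "h > 0" "h \<le> 1" by (simp_all add: h_def)
  have lam: "strict_mono lam"
    unfolding lam_def using \<open>h > 0\<close> by (rule strict_mono_isolated_cluster)
  have t: "t n \<ge> 0" for n using \<open>x \<ge> 1\<close> by (simp add: t_def)
  have entry: "h powr \<alpha> * x / 4 \<le> hilbert_term \<alpha> lam t 1 n" if n: "n \<in> {2..K + 1}" for n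
  proof -
    have "real (n - 2) * h \<le> 1"
      using n \<open>K \<ge> 1\<close> by (simp add: h_def field_simps)
    then show ?thesis
      using hilbert_term_isolated_cluster_ge[of h n t \<alpha>] n t \<open>h > 0\<close> \<open>h \<le> 1\<close> \<open>x \<ge> 1\<close>
      by (simp add: lam_def t_def)
  qed
  have "real K * (h powr \<alpha> * x / 4) = (\<Sum>n\<in>{1..K + 1} - {1}. h powr \<alpha> * x / 4)"
    by simp
  also have "\<dots> \<le> (\<Sum>n\<in>{1..K + 1} - {1}. hilbert_term \<alpha> lam t 1 n)"
    using entry by (intro sum_mono) auto
  also have "\<dots> \<le> hilbert_form \<alpha> (K + 1) lam t"
    using t by (intro hilbert_form_ge_row) auto
  also have "\<dots> \<le> C * (\<Sum>n\<in>{1..K + 1}. (t n)^2)"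
    using t by (intro admissible_constD[OF A _ lam]) auto
  also have "(\<Sum>n\<in>{1..K + 1}. (t n)^2) = 2 * real K"
    by (simp add: sum.atLeast_Suc_atMost t_def x_def K_def)
  finally have bound: "h powr \<alpha> * x \<le> 8 * C"
    using \<open>K \<ge> 1\<close> by (simp add: field_simps)
  have "h = x powr (-2)"
    using \<open>x \<ge> 1\<close> by (simp add: h_def K_def x_def powr_minus powr_realpow divide_inverse)
  then have "h powr \<alpha> = x powr (-2 * \<alpha>)"
    by (simp only: powr_powr)
  moreover have "x powr (1 - 2 * \<alpha>) = x powr (-2 * \<alpha>) * x powr 1"
    by (simp only: powr_add[symmetric]) simp
  ultimately show ?thesis
    using bound \<open>x \<ge> 1\<close> by (simp add: x_def)
qed

lemma not_admissible_const_below_half: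
  assumes "\<alpha> < 1/2"
  shows "\<not> admissible_const \<alpha> C"
proof
  assume A: "admissible_const \<alpha> C"
  have "filterlim (\<lambda>j. real j powr (1 - 2 * \<alpha>)) at_top sequentially"
    using assms by real_asymp
  then have "eventually (\<lambda>j. 8 * C < real j powr (1 - 2 * \<alpha>) \<and> j \<ge> 1) sequentially"
    by (intro eventually_conj) (simp_all add: filterlim_at_top_dense eventually_ge_at_top)
  then obtain j where "8 * C < real j powr (1 - 2 * \<alpha>)" "j \<ge> 1"
    using eventually_happens'[OF sequentially_bot] by blast
  with admissible_const_growth[OF A] show False by fastforce
qed

lemma Cbar_below_half: "\<alpha> < 1/2 \<Longrightarrow> Cbar \<alpha> = \<infinity>"
  by (simp add: Cbar_eq_infinity_iff not_admissible_const_below_half)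

theorem theorem3:
  shows "(\<forall>\<alpha>::real. 0 \<le> \<alpha> \<and> \<alpha> \<le> 2 \<longrightarrow> Cbar \<alpha> = Cbar (2 - \<alpha>) \<and> Cbar \<alpha> > 0)
    \<and> (\<forall>\<alpha>1 \<alpha>2 \<theta>::real. 0 \<le> \<alpha>1 \<and> \<alpha>1 < \<alpha>2 \<and> \<alpha>2 \<le> 2 \<and> 0 < \<theta> \<and> \<theta> < 1 \<longrightarrow>
          Cbar \<alpha>1 = \<infinity> \<or> Cbar \<alpha>2 = \<infinity> \<or>
          Cbar (\<theta> * \<alpha>1 + (1 - \<theta>) * \<alpha>2)
            \<le> ereal (real_of_ereal (Cbar \<alpha>1) powr \<theta> * real_of_ereal (Cbar \<alpha>2) powr (1 - \<theta>)))
    \<and> (\<forall>\<alpha>1 \<alpha>2::real. 0 \<le> \<alpha>1 \<and> \<alpha>1 < \<alpha>2 \<and> \<alpha>2 \<le> 1 \<longrightarrow> Cbar \<alpha>1 \<ge> Cbar \<alpha>2)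
    \<and> (\<forall>\<alpha>::real. 0 \<le> \<alpha> \<and> \<alpha> \<le> 2 \<longrightarrow> Cbar 1 \<le> Cbar \<alpha>)
    \<and> (\<forall>\<alpha>::real. 0 \<le> \<alpha> \<and> \<alpha> < 1/2 \<longrightarrow> Cbar \<alpha> = \<infinity>)"
proof (intro conjI allI impI)
  fix \<alpha> :: real
  show "Cbar \<alpha> = Cbar (2 - \<alpha>)" by (simp add: Cbar_reflect)
  show "Cbar \<alpha> > 0" using less_le_trans[of 0 1 "Cbar \<alpha>"] Cbar_ge_one[of \<alpha>] by simp
next
  fix \<alpha>1 \<alpha>2 \<theta> :: real
  assume "0 \<le> \<alpha>1 \<and> \<alpha>1 < \<alpha>2 \<and> \<alpha>2 \<le> 2 \<and> 0 < \<theta> \<and> \<theta> < 1"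
  moreover have "Cbar \<alpha> = \<infinity> \<or> Cbar \<alpha> = ereal (real_of_ereal (Cbar \<alpha>))" for \<alpha>
    using Cbar_ge_one[of \<alpha>] by (cases "Cbar \<alpha>") auto
  ultimately show "Cbar \<alpha>1 = \<infinity> \<or> Cbar \<alpha>2 = \<infinity> \<or> Cbar (\<theta> * \<alpha>1 + (1 - \<theta>) * \<alpha>2)
      \<le> ereal (real_of_ereal (Cbar \<alpha>1) powr \<theta> * real_of_ereal (Cbar \<alpha>2) powr (1 - \<theta>))"
    by (metis Cbar_interpolate)
next
  fix \<alpha>1 \<alpha>2 :: real
  assume "0 \<le> \<alpha>1 \<and> \<alpha>1 < \<alpha>2 \<and> \<alpha>2 \<le> 1"
  then show "Cbar \<alpha>2 \<le> Cbar \<alpha>1" by (intro Cbar_closer_to_one) auto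
next
  fix \<alpha> :: real
  show "Cbar 1 \<le> Cbar \<alpha>" by (intro Cbar_closer_to_one) simp
next
  fix \<alpha> :: real
  assume "0 \<le> \<alpha> \<and> \<alpha> < 1/2"
  then show "Cbar \<alpha> = \<infinity>" by (simp add: Cbar_below_half)
qed

end
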